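(* Let $B$ be an integral domain containing $A$ as a subring, let $f:A\to B$ be $\mathbb{F}_q$-linear, and let $d\ge1$. Then in $\mathrm{Frac}(B)[z]$, $$(-1)^{d+1}\frac{L_{d+1}}{D_{d+1}}P_{d+1}(f)(z)-\alpha_{d+1,d}(f)\,e_d(z)=(-1)^d\frac{L_d}{D_d}P_d(f)(z).$$
   Context: $q$ is a power of a prime, $A=\mathbb{F}_q[\theta]$, $A_+(d)$ the monic polynomials of degree $d$, $A(d)$ the polynomials of degree $<d$ ($A(0)=\{0\}$). $D_d$ is the product of all monic polynomials of degree $d$, $L_d$ the lcm of all polynomials of degree $d$, $D_0=L_0=1$. $e_i(z):=\prod_{a\in A(i)}(z-a)$, a monic $\mathbb{F}_q$-linear polynomial of degree $q^i$. For $f:A\to B$, $M_d(f)(z):=\sum_{b\in A_+(d)} f(b)\prod_{a\in A_+(d)\setminus\{b\}}(z-a)$ and $P_d(f)(z):=M_d(f)(z)-M_d(f)(0)$; for $\mathbb{F}_q$-linear $f$ and $d\ge1$, $P_d(f)$ is an $\mathbb{F}_q$-linear polynomial of degree at most $q^{d-1}$, and the coefficients $\alpha_{d,i}(f)\in\mathrm{Frac}(B)$, $0\le i<d$, are defined by the unique expansion $(-1)^d\frac{L_d}{D_d}P_d(f)(z)=\sum_{i=0}^{d-1}\alpha_{d,i}(f)e_i(z)$. *)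

theory Defs
  imports "HOL-Computational_Algebra.Computational_Algebra"
begin

text \<open>A = F_q[theta] is modelled as the type 'k poly with 'k a finite field.
 B is an integral domain 'b, containing A via an injective ring homomorphism iota.
 Frac(B) is 'b fract.\<close>

definition Adeg :: "nat \<Rightarrow> 'k::{field_gcd,finite} poly set" where
  "Adeg d = {p. p = 0 \<or> degree p < d}"

definition Amon :: "nat \<Rightarrow> 'k::{field_gcd,finite} poly set" where
  "Amon d = {p. lead_coeff p = 1 \<and> degree p = d}"

definition Dd :: "nat \<Rightarrow> 'k::{field_gcd,finite} poly" where
  "Dd d = (\<Prod>p\<in>Amon d. p)"

definition Ld :: "nat \<Rightarrow> 'k::{field_gcd,finite} poly" where
  "Ld d = (if d = 0 then 1 else Lcm {p. degree p = d})"

definition emb :: "('k::{field_gcd,finite} poly \<Rightarrow> 'b::idom) \<Rightarrow> 'k poly \<Rightarrow> 'b fract" where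
  "emb \<iota> a = to_fract (\<iota> a)"

definition e_pol :: "('k::{field_gcd,finite} poly \<Rightarrow> 'b::idom) \<Rightarrow> nat \<Rightarrow> 'b fract poly" where
  "e_pol \<iota> i = (\<Prod>a\<in>Adeg i. [:- emb \<iota> a, 1:])"

definition M_pol :: "('k::{field_gcd,finite} poly \<Rightarrow> 'b::idom) \<Rightarrow> nat \<Rightarrow> ('k poly \<Rightarrow> 'b) \<Rightarrow> 'b fract poly" where
  "M_pol \<iota> d f = (\<Sum>b\<in>Amon d. smult (to_fract (f b)) (\<Prod>a\<in>Amon d - {b}. [:- emb \<iota> a, 1:]))"

definition P_pol :: "('k::{field_gcd,finite} poly \<Rightarrow> 'b::idom) \<Rightarrow> nat \<Rightarrow> ('k poly \<Rightarrow> 'b) \<Rightarrow> 'b fract poly" where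
  "P_pol \<iota> d f = M_pol \<iota> d f - [:poly (M_pol \<iota> d f) 0:]"

definition nP_pol :: "('k::{field_gcd,finite} poly \<Rightarrow> 'b::idom) \<Rightarrow> nat \<Rightarrow> ('k poly \<Rightarrow> 'b) \<Rightarrow> 'b fract poly" where
  "nP_pol \<iota> d f = smult ((-1) ^ d * emb \<iota> (Ld d) / emb \<iota> (Dd d)) (P_pol \<iota> d f)"

definition alpha :: "('k::{field_gcd,finite} poly \<Rightarrow> 'b::idom) \<Rightarrow> nat \<Rightarrow> nat \<Rightarrow> ('k poly \<Rightarrow> 'b) \<Rightarrow> 'b fract" where
  "alpha \<iota> d i f = (THE c. (\<forall>j. d \<le> j \<longrightarrow> c j = 0) \<and>
      nP_pol \<iota> d f = (\<Sum>j<d. smult (c j) (e_pol \<iota> j))) i"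

end

theory Submission
  imports Defs "HOL-Library.Cardinality"
begin

text \<open>
  Write \<open>N\<^sub>d = (-1)^d L\<^sub>d / D\<^sub>d \<cdot> P\<^sub>d(f)\<close>. Comparing multiplicities of monic irreducibles shows
  \<open>D\<^sub>d = L\<^sub>d \<Prod>\<^sub>j\<^sub><\<^sub>d D\<^sub>j^(q-1)\<close>, while pairing \<open>A(j+1) - A(j)\<close> with \<open>\<bbbF>\<^sub>q\<^sup>* \<times> A\<^sub>+(j)\<close> and Wilson's theorem
  for \<open>\<bbbF>\<^sub>q\<close> give \<open>\<Prod>(A(d) - {0}) = (-1)^d \<Prod>\<^sub>j\<^sub><\<^sub>d D\<^sub>j^(q-1)\<close>. So the normalising factor of \<open>N\<^sub>d\<close> is
  \<open>1 / \<Prod>(A(d) - {0})\<close>, which makes \<open>N\<^sub>d\<close>, up to its constant term, the Lagrange interpolant of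
  \<open>f\<close> on the coset \<open>A\<^sub>+(d) = \<theta>^d + A(d)\<close>; additivity of \<open>f\<close> then shows that \<open>N\<^sub>d\<close> itself is the unique
  polynomial of degree \<open>< q^d\<close> interpolating \<open>f\<close> on \<open>A(d)\<close>.

  The \<open>e\<^sub>j\<close> are \<open>\<bbbF>\<^sub>q\<close>-linear and \<open>e\<^sub>j\<close> vanishes on \<open>A(j)\<close> but not at \<open>\<theta>^j\<close>. Hence the interpolant
  on \<open>A(n+1) = \<bbbF>\<^sub>q \<theta>^n + A(n)\<close> is obtained from the one on \<open>A(n)\<close> by adding a suitable multiple of
  \<open>e\<^sub>n\<close>, so the \<open>e\<close>-expansions of \<open>N\<^sub>d\<close> and \<open>N\<^sub>d\<^sub>+\<^sub>1\<close> agree except for the last term.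
\<close>

section \<open>Finite fields\<close>

lemma finite_field_power_card:
  fixes x :: "'k::{field,finite}"
  shows "x ^ CARD('k) = x"
proof (cases "x = 0")
  case False
  \<comment> \<open>multiplication by \<open>x\<close> permutes the nonzero elements\<close>
  have "x * (\<Prod>y\<in>UNIV-{0}. x * y) = x * x ^ (CARD('k) - 1) * \<Prod>(UNIV-{0})"
    by (simp add: prod.distrib mult_ac)
  also have "x * x ^ (CARD('k) - 1) = x ^ Suc (CARD('k) - 1)"
    by (subst power_Suc) auto
  also have "Suc (CARD('k) - 1) = CARD('k)"
    using finite_UNIV_card_ge_0[where ?'a = 'k] by simp
  also have "(\<Prod>y\<in>UNIV-{0}. x * y) = (\<Prod>y\<in>UNIV-{0}. y)"
    by (rule prod.reindex_bij_witness[of _ "\<lambda>y. y / x" "\<lambda>y. x * y"]) (use False in auto)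
  finally show ?thesis
    by simp
qed (use finite_UNIV_card_ge_0[where ?'a = 'k] in auto)

lemma finite_field_power_card_power:
  fixes x :: "'k::{field,finite}"
  shows "x ^ (CARD('k) ^ n) = x"
  by (induction n) (simp_all add: finite_field_power_card power_mult)

lemma card_finite_field_ge_2: "CARD('k::{field,finite}) \<ge> 2"
proof -
  have "card {0::'k, 1} \<le> CARD('k)"
    by (rule card_mono) auto
  thus ?thesis
    by simp
qed

lemma prod_linear_factors_finite_field:
  "(\<Prod>g\<in>UNIV. [:-g, 1:]) = monom 1 CARD('k) - [:0, 1::'k::{field,finite}:]"
  (is "?p = ?r")
proof (rule poly_eqI_degree_lead_coeff[where n = "CARD('k)" and A = UNIV])
  have deg: "degree ?p = CARD('k)"
    by (subst degree_prod_sum_eq) auto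
  have lead: "lead_coeff ?p = 1"
    by (simp add: lead_coeff_prod)
  obtain m where m: "CARD('k) = Suc (Suc m)"
    using card_finite_field_ge_2[where 'k='k] by (metis add_2_eq_Suc le_Suc_ex)
  show "coeff ?p CARD('k) = coeff ?r CARD('k)"
    using lead deg m by simp
  show "degree ?p \<le> CARD('k)"
    using deg by simp
  show "degree ?r \<le> CARD('k)"
    using card_finite_field_ge_2[where 'k='k]
    by (intro order.trans[OF degree_diff_le_max]) (auto simp: degree_monom_eq)
  fix z :: 'k
  have "poly ?p z = 0"
    by (simp add: poly_prod prod_zero)
  thus "poly ?p z = poly ?r z"
    by (simp add: poly_monom finite_field_power_card)
qed simp

lemma prod_nonzero_finite_field: "(\<Prod>g\<in>UNIV - {0}. g) = (-1::'k::{field,finite})"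
proof -
  let ?q = "CARD('k)" and ?h = "\<Prod>g\<in>UNIV - {0::'k}. [:-g, 1:]"
  have "[:0, 1:] * ?h = monom 1 ?q - [:0, 1:]"
    by (subst prod_linear_factors_finite_field[symmetric], subst prod.remove[where x = 0]) auto
  hence "coeff ([:0, 1:] * ?h) 1 = -1"
    using card_finite_field_ge_2[where 'k='k] by simp
  hence "poly ?h 0 = -1"
    by (simp add: poly_0_coeff_0)
  hence "(\<Prod>g\<in>UNIV - {0::'k}. - g) = -1"
    by (simp add: poly_prod)
  hence "(-1) ^ (?q - 1) * (\<Prod>g\<in>UNIV - {0::'k}. g) = -1"
    by (simp add: prod_uminus card_Diff_singleton_if)
  moreover have "(-1::'k) ^ (?q - 1) = 1"
  proof -
    have "(-1::'k) ^ (?q - 1) * (-1) = -1"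
      using finite_field_power_card[of "-1::'k"] card_finite_field_ge_2[where 'k='k]
      by (metis Suc_diff_1 less_le_trans pos2 power_Suc2)
    thus ?thesis
      by simp
  qed
  ultimately show ?thesis
    by simp
qed

section \<open>The sets \<open>A(n)\<close> and \<open>A\<^sub>+(n)\<close>\<close>

lemma Adeg_iff_coeff: "(a :: 'k::{field_gcd,finite} poly) \<in> Adeg n \<longleftrightarrow> (\<forall>k\<ge>n. coeff a k = 0)"
proof
  assume "a \<in> Adeg n"
  thus "\<forall>k\<ge>n. coeff a k = 0"
    by (auto simp: Adeg_def coeff_eq_0)
next
  assume "\<forall>k\<ge>n. coeff a k = 0"
  thus "a \<in> Adeg n"
    using degree_lessI[of a n] by (cases "a = 0") (auto simp: Adeg_def)
qed

lemma Amon_iff_coeff: "(a :: 'k::{field_gcd,finite} poly) \<in> Amon n \<longleftrightarrow> coeff a n = 1 \<and> (\<forall>k>n. coeff a k = 0)"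
proof
  assume "a \<in> Amon n"
  thus "coeff a n = 1 \<and> (\<forall>k>n. coeff a k = 0)"
    by (auto simp: Amon_def coeff_eq_0)
next
  assume h: "coeff a n = 1 \<and> (\<forall>k>n. coeff a k = 0)"
  hence "degree a = n"
    by (intro antisym degree_le le_degree) auto
  thus "a \<in> Amon n"
    using h by (simp add: Amon_def)
qed

lemma
  fixes a b :: "'k::{field_gcd,finite} poly"
  shows Adeg_add: "a \<in> Adeg n \<Longrightarrow> b \<in> Adeg n \<Longrightarrow> a + b \<in> Adeg n"
    and Adeg_diff: "a \<in> Adeg n \<Longrightarrow> b \<in> Adeg n \<Longrightarrow> a - b \<in> Adeg n"
    and Adeg_smult: "a \<in> Adeg n \<Longrightarrow> smult c a \<in> Adeg n"
    and Adeg_Suc: "a \<in> Adeg n \<Longrightarrow> a \<in> Adeg (Suc n)"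
    and Adeg_Suc_minus_monom: "a \<in> Adeg (Suc n) \<Longrightarrow> a - smult (coeff a n) (monom 1 n) \<in> Adeg n"
    and Amon_add_Adeg: "a \<in> Amon n \<Longrightarrow> b \<in> Adeg n \<Longrightarrow> a + b \<in> Amon n"
    and Amon_diff_Adeg: "a \<in> Amon n \<Longrightarrow> b \<in> Adeg n \<Longrightarrow> a - b \<in> Amon n"
    and Amon_nonzero: "a \<in> Amon n \<Longrightarrow> a \<noteq> 0"
  by (auto simp: Adeg_iff_coeff Amon_iff_coeff)

lemma Amon_diff_Amon:
  "(a :: 'k::{field_gcd,finite} poly) \<in> Amon n \<Longrightarrow> b \<in> Amon n \<Longrightarrow> a - b \<in> Adeg n"
  by (auto simp: Amon_iff_coeff Adeg_iff_coeff) (metis le_neq_implies_less)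

lemma zero_in_Adeg [simp]: "0 \<in> Adeg n"
  by (simp add: Adeg_def)

lemma monom_notin_Adeg: "monom 1 n \<notin> (Adeg n :: 'k::{field_gcd,finite} poly set)"
  by (auto simp: Adeg_iff_coeff)

lemma monom_in_Amon: "monom 1 n \<in> Amon n"
  by (simp add: Amon_iff_coeff)

lemma Adeg_0: "Adeg 0 = {0}"
  by (auto simp: Adeg_def)

lemma Adeg_eq_image_Poly:
  "Adeg n = Poly ` {xs. length xs = n}"
proof (intro equalityI subsetI)
  fix a :: "'k::{field_gcd,finite} poly"
  assume a: "a \<in> Adeg n"
  have "a = Poly (map (coeff a) [0..<n])"
    using a by (intro poly_eqI) (auto simp: nth_default_def Adeg_iff_coeff)
  thus "a \<in> Poly ` {xs. length xs = n}"
    by auto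
qed (auto simp: Adeg_iff_coeff nth_default_def)

lemma inj_on_Poly_length: "inj_on Poly {xs. length xs = n}"
proof (rule inj_onI)
  fix xs ys :: "'a::zero list"
  assume "xs \<in> {xs. length xs = n}" "ys \<in> {xs. length xs = n}" and eq: "Poly xs = Poly ys"
  then show "xs = ys"
    by (metis (mono_tags, lifting) coeff_Poly_eq mem_Collect_eq nth_default_def nth_equalityI)
qed

lemma finite_Adeg [simp]: "finite (Adeg n :: 'k::{field_gcd,finite} poly set)"
  using finite_lists_length_eq[of "UNIV :: 'k set" n]
  by (simp add: Adeg_eq_image_Poly)

lemma card_Adeg: "card (Adeg n :: 'k::{field_gcd,finite} poly set) = CARD('k) ^ n"
  unfolding Adeg_eq_image_Poly
  using card_lists_length_eq[of "UNIV :: 'k set" n]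
  by (simp add: card_image[OF inj_on_Poly_length])

lemma Amon_eq_image_Adeg: "Amon n = (\<lambda>b. monom 1 n + b) ` Adeg n"
proof (intro equalityI subsetI)
  fix a :: "'k::{field_gcd,finite} poly"
  assume "a \<in> Amon n"
  hence "a - monom 1 n \<in> Adeg n"
    using Amon_diff_Amon monom_in_Amon by blast
  thus "a \<in> (\<lambda>b. monom 1 n + b) ` Adeg n"
    by (intro image_eqI[where x = "a - monom 1 n"]) auto
qed (auto intro: Amon_add_Adeg monom_in_Amon)

lemma finite_Amon [simp]: "finite (Amon n :: 'k::{field_gcd,finite} poly set)"
  by (simp add: Amon_eq_image_Adeg)

lemma card_Amon: "card (Amon n :: 'k::{field_gcd,finite} poly set) = CARD('k) ^ n"
  unfolding Amon_eq_image_Adeg by (subst card_image) (auto simp: inj_on_def card_Adeg)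

lemma Amon_0: "Amon 0 = {1::'k::{field_gcd,finite} poly}"
  by (simp add: Amon_eq_image_Adeg Adeg_0)

lemma Adeg_Suc_diff_eq_image_smult:
  "Adeg (Suc n) - Adeg n = (\<lambda>(g, m). smult g m) ` ((UNIV - {0}) \<times> Amon n)"
proof (intro equalityI subsetI)
  fix c :: "'k::{field_gcd,finite} poly"
  assume c: "c \<in> Adeg (Suc n) - Adeg n"
  hence high: "\<forall>k>n. coeff c k = 0"
    by (auto simp: Adeg_iff_coeff)
  with c have cn: "coeff c n \<noteq> 0"
    by (auto simp: Adeg_iff_coeff) (metis le_neq_implies_less)
  have "smult (1 / coeff c n) c \<in> Amon n"
    using cn high by (simp add: Amon_iff_coeff)
  thus "c \<in> (\<lambda>(g, m). smult g m) ` ((UNIV - {0}) \<times> Amon n)"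
    using cn by (auto intro!: image_eqI[where x = "(coeff c n, smult (1 / coeff c n) c)"])
qed (auto simp: Adeg_iff_coeff Amon_iff_coeff)

lemma inj_on_smult_Amon:
  "inj_on (\<lambda>(g, m). smult g m) ((UNIV - {0}) \<times> (Amon n :: 'k::{field_gcd,finite} poly set))"
proof (rule inj_onI)
  fix x y :: "'k \<times> 'k poly"
  assume "x \<in> (UNIV - {0}) \<times> Amon n" "y \<in> (UNIV - {0}) \<times> Amon n"
    and eq: "(\<lambda>(g, m). smult g m) x = (\<lambda>(g, m). smult g m) y"
  then obtain g m g' m' where xy: "x = (g, m)" "y = (g', m')" and
    gm: "g \<noteq> 0" "m \<in> Amon n" "m' \<in> Amon n" and eq': "smult g m = smult g' m'"
    by auto
  have "g = g'"
    using arg_cong[OF eq', of "\<lambda>p. coeff p n"] gm by (simp add: Amon_iff_coeff)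
  with eq' gm show "x = y"
    using xy by (simp add: smult_eq_iff)
qed

section \<open>The Carlitz product formulas\<close>

definition Dd_power_prod :: "nat \<Rightarrow> 'k::{field_gcd,finite} poly" where
  "Dd_power_prod n = (\<Prod>j<n. Dd j ^ (CARD('k) - 1))"

lemma Dd_nonzero: "Dd n \<noteq> (0::'k::{field_gcd,finite} poly)"
  unfolding Dd_def by (auto dest: Amon_nonzero)

lemma lead_coeff_Dd: "lead_coeff (Dd n :: 'k::{field_gcd,finite} poly) = 1"
  unfolding Dd_def lead_coeff_prod by (rule prod.neutral) (auto simp: Amon_def)

lemma Dd_power_prod_nonzero: "Dd_power_prod n \<noteq> (0::'k::{field_gcd,finite} poly)"
  unfolding Dd_power_prod_def using Dd_nonzero by auto

lemma lead_coeff_Dd_power_prod: "lead_coeff (Dd_power_prod n :: 'k::{field_gcd,finite} poly) = 1"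
  unfolding Dd_power_prod_def by (simp add: lead_coeff_prod lead_coeff_power lead_coeff_Dd)

lemma prod_nonzero_Adeg_Suc:
  "(\<Prod>c\<in>Adeg (Suc n) - {0}. c) =
     - (\<Prod>c\<in>Adeg n - {0}. c) * (Dd n :: 'k::{field_gcd,finite} poly) ^ (CARD('k) - 1)"
proof -
  have split: "Adeg (Suc n) - {0} = (Adeg n - {0}) \<union> (Adeg (Suc n) - Adeg n)"
    by (auto intro: Adeg_Suc)
  have "(\<Prod>c\<in>Adeg (Suc n) - {0}. c) = (\<Prod>c\<in>Adeg n - {0}. c) * (\<Prod>c\<in>Adeg (Suc n) - Adeg n. c)"
    unfolding split by (rule prod.union_disjoint) auto
  also have "(\<Prod>c\<in>Adeg (Suc n) - Adeg n. c) = (\<Prod>g\<in>UNIV - {0}. \<Prod>m\<in>Amon n. smult g (m::'k poly))"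
    unfolding Adeg_Suc_diff_eq_image_smult
    by (simp add: prod.reindex[OF inj_on_smult_Amon] prod.cartesian_product)
  also have "\<dots> = (\<Prod>g\<in>UNIV - {0}. smult (g ^ (CARD('k) ^ n)) (Dd n))"
    by (simp only: prod_smult prod_constant card_Amon Dd_def)
  also have "\<dots> = smult (\<Prod>g\<in>UNIV - {0}. g) (Dd n ^ (CARD('k) - 1))"
    by (simp add: finite_field_power_card_power prod_smult card_Diff_singleton_if)
  also have "\<dots> = - (Dd n ^ (CARD('k) - 1))"
    by (simp add: prod_nonzero_finite_field)
  finally show ?thesis
    by simp
qed

lemma prod_nonzero_Adeg:
  "(\<Prod>c\<in>Adeg n - {0}. c) = (-1) ^ n * (Dd_power_prod n :: 'k::{field_gcd,finite} poly)"
  by (induction n) (simp_all add: Adeg_0 prod_nonzero_Adeg_Suc Dd_power_prod_def)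

lemma geometric_sum_nat: "(q::nat) \<ge> 1 \<Longrightarrow> (q - 1) * (\<Sum>i<m. q ^ i) + 1 = q ^ m"
proof -
  assume q: "q \<ge> 1"
  have "int ((q - 1) * (\<Sum>i<m. q ^ i) + 1) = (int q - 1) * (\<Sum>i<m. int q ^ i) + 1"
    using q by simp
  also have "\<dots> = int (q ^ m)"
    by (simp add: power_diff_1_eq[symmetric] mult.commute)
  finally show ?thesis
    by linarith
qed

lemma shifted_recurrence_closed_form:
  fixes T :: "nat \<Rightarrow> nat" and k q :: nat
  assumes k: "k \<ge> 1" and q: "q \<ge> 1"
    and T_small: "\<And>j. j < k \<Longrightarrow> T j = 0"
    and T_rec: "\<And>j. k \<le> j \<Longrightarrow> T j = q ^ (j - k) + T (j - k)"
  shows "T n = n div k + (q - 1) * (\<Sum>i<n. T i)"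
proof (induction n rule: less_induct)
  case (less n)
  show ?case
  proof (cases "n < k")
    case True
    thus ?thesis
      using T_small by simp
  next
    case False
    then obtain m where n: "n = m + k"
      by (metis add.commute le_add_diff_inverse not_less)
    have shift: "(\<Sum>i<m' + k. T i) = (\<Sum>i<m'. q ^ i + T i)" for m'
    proof (induction m')
      case (Suc m')
      have "T (m' + k) = q ^ m' + T m'"
        using T_rec[of "m' + k"] by simp
      thus ?case
        using Suc by simp
    qed (simp add: T_small)
    have "n div k = m div k + 1"
      using n k by simp
    moreover have "(q - 1) * (\<Sum>i<n. T i) = (q - 1) * (\<Sum>i<m. q ^ i) + (q - 1) * (\<Sum>i<m. T i)"
      using shift[of m] n by (simp add: sum.distrib algebra_simps)
    ultimately have "n div k + (q - 1) * (\<Sum>i<n. T i)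
          = ((q - 1) * (\<Sum>i<m. q ^ i) + 1) + (m div k + (q - 1) * (\<Sum>i<m. T i))"
      by simp
    also have "\<dots> = q ^ m + T m"
      using geometric_sum_nat[OF q, of m] less[of m] n k by simp
    finally show ?thesis
      using T_rec[of n] n by simp
  qed
qed

lemma lead_coeff_prime_poly:
  fixes P :: "'k::field_gcd poly"
  assumes "prime P"
  shows "lead_coeff P = 1"
proof -
  have "P \<noteq> 0"
    using assms by auto
  hence "normalize (lead_coeff P) = 1"
    by (simp add: is_unit_normalize dvd_field_iff)
  hence "unit_factor (lead_coeff P) = lead_coeff P"
    using unit_factor_mult_normalize[of "lead_coeff P"] by simp
  moreover have "unit_factor P = 1"
    using assms by (metis normalize_prime not_prime_0 unit_factor_normalize)
  ultimately show ?thesis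
    by (simp add: unit_factor_poly_def one_pCons)
qed

lemma degree_prime_poly_pos:
  fixes P :: "'k::field_gcd poly"
  assumes P: "prime P"
  shows "degree P \<ge> 1"
proof (rule ccontr)
  assume "\<not> degree P \<ge> 1"
  moreover have "P \<noteq> 0"
    using P by auto
  ultimately have "is_unit P"
    by (simp add: is_unit_iff_degree)
  thus False
    using P by auto
qed

context
  fixes P :: "'k::{field_gcd,finite} poly"
  assumes P: "prime P"
begin

lemma Amon_dvd_eq_image_mult:
  assumes "degree P \<le> j"
  shows "{m \<in> Amon j. P dvd m} = (\<lambda>r. P * r) ` Amon (j - degree P)"
proof (intro equalityI subsetI)
  fix m
  assume "m \<in> {m \<in> Amon j. P dvd m}"
  then obtain r where m: "m \<in> Amon j" "m = P * r"
    by auto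
  hence "r \<noteq> 0"
    using Amon_nonzero[of m j] by auto
  moreover have "degree m = degree P + degree r"
    using m P \<open>r \<noteq> 0\<close> by (auto simp: degree_mult_eq)
  moreover have "lead_coeff m = lead_coeff r"
    unfolding m(2) lead_coeff_mult lead_coeff_prime_poly[OF P] by simp
  ultimately have "r \<in> Amon (j - degree P)"
    using m by (auto simp: Amon_def)
  thus "m \<in> (\<lambda>r. P * r) ` Amon (j - degree P)"
    using m by auto
next
  fix m
  assume "m \<in> (\<lambda>r. P * r) ` Amon (j - degree P)"
  then obtain r where r: "r \<in> Amon (j - degree P)" "m = P * r"
    by auto
  moreover have "degree m = j"
    using Amon_nonzero[OF r(1)] r P assms by (simp add: degree_mult_eq Amon_def)
  moreover have "lead_coeff m = 1"
    using r(1) unfolding r(2) lead_coeff_mult lead_coeff_prime_poly[OF P] by (auto simp: Amon_def)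
  ultimately show "m \<in> {m \<in> Amon j. P dvd m}"
    by (simp add: Amon_def)
qed

lemma multiplicity_Dd: "multiplicity P (Dd j) = (\<Sum>m\<in>Amon j. multiplicity P m)"
  unfolding Dd_def using P by (intro prime_elem_multiplicity_prod_distrib) (auto dest: Amon_nonzero)

lemma multiplicity_Dd_small:
  assumes "j < degree P"
  shows "multiplicity P (Dd j) = 0"
  unfolding multiplicity_Dd
proof (intro sum.neutral ballI not_dvd_imp_multiplicity_0 notI)
  fix m
  assume "m \<in> Amon j" "P dvd m"
  hence "degree P \<le> degree m"
    by (simp add: Amon_nonzero dvd_imp_degree_le)
  thus False
    using assms \<open>m \<in> Amon j\<close> by (simp add: Amon_def)
qed

lemma multiplicity_Dd_rec:
  assumes j: "degree P \<le> j"
  shows "multiplicity P (Dd j) = CARD('k) ^ (j - degree P) + multiplicity P (Dd (j - degree P))"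
proof -
  have "multiplicity P (Dd j) = (\<Sum>m\<in>{m \<in> Amon j. P dvd m}. multiplicity P m)"
    unfolding multiplicity_Dd sum.inter_filter[OF finite_Amon]
    by (intro sum.cong) (auto intro: not_dvd_imp_multiplicity_0)
  also have "\<dots> = (\<Sum>r\<in>Amon (j - degree P). multiplicity P (P * r))"
    unfolding Amon_dvd_eq_image_mult[OF j] using P by (subst sum.reindex) (auto simp: inj_on_def)
  also have "\<dots> = (\<Sum>r\<in>Amon (j - degree P). 1 + multiplicity P r)"
    using P by (intro sum.cong refl)
      (simp add: Amon_nonzero prime_elem_multiplicity_mult_distrib multiplicity_self)
  also have "\<dots> = CARD('k) ^ (j - degree P) + multiplicity P (Dd (j - degree P))"
    by (simp only: sum.distrib card_Amon multiplicity_Dd sum_constant) simp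
  finally show ?thesis .
qed

lemma multiplicity_Dd_power_prod:
  "multiplicity P (Dd_power_prod n) = (CARD('k) - 1) * (\<Sum>j<n. multiplicity P (Dd j))"
proof -
  have "multiplicity P (Dd_power_prod n) = (\<Sum>j<n. multiplicity P (Dd j ^ (CARD('k) - 1)))"
    unfolding Dd_power_prod_def using P Dd_nonzero[where 'k='k]
    by (intro prime_elem_multiplicity_prod_distrib) auto
  also have "\<dots> = (\<Sum>j<n. (CARD('k) - 1) * multiplicity P (Dd j))"
    using P Dd_nonzero[where 'k='k]
    by (intro sum.cong refl) (simp add: prime_elem_multiplicity_power_distrib)
  finally show ?thesis
    by (simp add: sum_distrib_left)
qed

lemma multiplicity_Dd_eq:
  "multiplicity P (Dd n) = n div degree P + multiplicity P (Dd_power_prod n)"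
  unfolding multiplicity_Dd_power_prod
  by (rule shifted_recurrence_closed_form[where T = "\<lambda>j. multiplicity P (Dd j)"])
     (use degree_prime_poly_pos[OF P] card_finite_field_ge_2[where 'k='k] multiplicity_Dd_small
        multiplicity_Dd_rec in auto)

end

text \<open>
  \<open>P^(n div deg P)\<close> divides a polynomial of degree \<open>n\<close>, and no polynomial of degree \<open>n\<close> is
  divisible by a higher power of \<open>P\<close>.
\<close>
lemma Lcm_degree_eqI:
  fixes G :: "'k::{field_gcd,finite} poly"
  assumes n: "n > 0" and G: "G \<noteq> 0" "lead_coeff G = 1"
    and mult_G: "\<And>P. prime P \<Longrightarrow> multiplicity P G = n div degree P"
  shows "Lcm {p. degree p = n} = G"
proof -
  let ?S = "{p::'k poly. degree p = n}"
  have "finite ?S"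
    by (rule finite_subset[OF _ finite_Adeg[of "Suc n"]]) (auto simp: Adeg_def)
  moreover have "0 \<notin> ?S"
    using n by simp
  ultimately have Lcm_nonzero: "Lcm ?S \<noteq> 0"
    by (simp add: Lcm_0_iff)
  have "m dvd G" if m: "m \<in> ?S" for m
  proof (rule multiplicity_le_imp_dvd)
    show m0: "m \<noteq> 0"
      using m n by auto
    fix P :: "'k poly"
    assume P: "prime P"
    have "P ^ multiplicity P m dvd m"
      by (rule multiplicity_dvd)
    hence "degree (P ^ multiplicity P m) \<le> n"
      using dvd_imp_degree_le[OF _ m0] m by simp
    hence "multiplicity P m * degree P \<le> n"
      using P by (simp add: degree_power_eq)
    thus "multiplicity P m \<le> multiplicity P G"
      using mult_G[OF P] degree_prime_poly_pos[OF P] by (simp add: less_eq_div_iff_mult_less_eq)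
  qed
  hence "Lcm ?S dvd G"
    by (rule Lcm_least)
  moreover have "G dvd Lcm ?S"
  proof (rule multiplicity_le_imp_dvd[OF G(1)])
    fix P :: "'k poly"
    assume P: "prime P"
    define e where "e = n div degree P"
    have le: "degree P * e \<le> n"
      unfolding e_def by (simp add: mult.commute)
    have "P ^ e * monom 1 (n - degree P * e) \<in> ?S"
      using P le by (simp add: degree_mult_eq degree_power_eq degree_monom_eq)
    hence "P ^ e dvd Lcm ?S"
      by (meson dvd_Lcm dvd_mult_left)
    hence "e \<le> multiplicity P (Lcm ?S)"
      using P Lcm_nonzero by (intro multiplicity_geI) auto
    thus "multiplicity P G \<le> multiplicity P (Lcm ?S)"
      using mult_G[OF P] unfolding e_def by simp
  qed
  ultimately have "normalize (Lcm ?S) = normalize G"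
    by (rule associatedI)
  moreover have "normalize G = G"
    using G(2) by (simp add: normalize_poly_def pCons_one)
  ultimately show ?thesis
    by simp
qed

lemma Dd_eq_Ld_mult_Dd_power_prod:
  "Dd n = Ld n * (Dd_power_prod n :: 'k::{field_gcd,finite} poly)"
proof (cases "n = 0")
  case True
  thus ?thesis
    by (simp add: Ld_def Dd_power_prod_def Dd_def Amon_0)
next
  case False
  have "Dd_power_prod n dvd (Dd n :: 'k poly)"
    by (rule multiplicity_le_imp_dvd[OF Dd_power_prod_nonzero]) (simp add: multiplicity_Dd_eq)
  then obtain G :: "'k poly" where G: "Dd n = Dd_power_prod n * G"
    by (elim dvdE)
  have G0: "G \<noteq> 0"
    using G Dd_nonzero[where 'k='k] by auto
  have "lead_coeff G = 1"
    using G lead_coeff_Dd[where 'k='k] lead_coeff_Dd_power_prod[where 'k='k]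
    by (metis lead_coeff_mult mult_1)
  moreover have "multiplicity P G = n div degree P" if P: "prime P" for P :: "'k poly"
  proof -
    have "multiplicity P (Dd n) = multiplicity P (Dd_power_prod n) + multiplicity P G"
      unfolding G using P G0 Dd_power_prod_nonzero[of n]
      by (intro prime_elem_multiplicity_mult_distrib) auto
    thus ?thesis
      using multiplicity_Dd_eq[OF P, of n] by simp
  qed
  ultimately have "Ld n = G"
    using False G0 by (simp add: Ld_def Lcm_degree_eqI)
  thus ?thesis
    using G by (simp add: mult.commute)
qed

lemma Ld_mult_prod_nonzero_Adeg:
  "Ld n * (\<Prod>c\<in>Adeg n - {0}. c) = (-1) ^ n * (Dd n :: 'k::{field_gcd,finite} poly)"
  by (simp add: prod_nonzero_Adeg Dd_eq_Ld_mult_Dd_power_prod mult.left_commute)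

section \<open>The \<open>\<bbbF>\<^sub>q\<close>-linear polynomials \<open>e\<^sub>n\<close>\<close>

locale Fq_poly_embedding =
  fixes \<iota> :: "'k::{field_gcd,finite} poly \<Rightarrow> 'b::idom"
  assumes hom_add: "\<And>a b. \<iota> (a + b) = \<iota> a + \<iota> b"
    and hom_mult: "\<And>a b. \<iota> (a * b) = \<iota> a * \<iota> b"
    and hom_one: "\<iota> 1 = 1"
    and inj: "inj \<iota>"
begin

abbreviation E where "E \<equiv> emb \<iota>"

lemma emb_add: "E (a + b) = E a + E b"
  by (simp add: emb_def hom_add)

lemma emb_zero: "E 0 = 0"
  using emb_add[of 0 0] by (metis add.right_neutral add_left_cancel)

lemma emb_diff: "E (a - b) = E a - E b"
  using emb_add[of "a - b" b] by (simp add: algebra_simps)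

lemma emb_uminus: "E (- a) = - E a"
  using emb_diff[of 0 a] by (simp add: emb_zero)

lemma emb_mult: "E (a * b) = E a * E b"
  by (simp add: emb_def hom_mult)

lemma emb_smult: "E (smult c a) = E [:c:] * E a"
  by (simp flip: emb_mult)

lemma emb_one: "E 1 = 1"
  by (simp add: emb_def hom_one)

lemma emb_power: "E (a ^ n) = E a ^ n"
  by (induction n) (simp_all add: emb_one emb_mult)

lemma emb_prod: "E (prod g A) = (\<Prod>x\<in>A. E (g x))"
  by (induction A rule: infinite_finite_induct) (simp_all add: emb_one emb_mult)

lemma emb_eq_iff: "E a = E b \<longleftrightarrow> a = b"
  using inj by (auto simp: emb_def inj_eq)

lemma inj_on_emb: "inj_on E A"
  by (simp add: inj_on_def emb_eq_iff)

lemma card_emb_Adeg: "card (E ` Adeg n) = CARD('k) ^ n"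
  and card_emb_Amon: "card (E ` Amon n) = CARD('k) ^ n"
  by (simp_all add: card_image[OF inj_on_emb] card_Adeg card_Amon)

lemma poly_e_pol: "poly (e_pol \<iota> n) x = (\<Prod>a\<in>Adeg n. x - E a)"
  by (simp add: e_pol_def poly_prod)

lemma degree_e_pol: "degree (e_pol \<iota> n) = CARD('k) ^ n"
  unfolding e_pol_def by (subst degree_prod_sum_eq) (auto simp: card_Adeg)

lemma lead_coeff_e_pol: "lead_coeff (e_pol \<iota> n) = 1"
  unfolding e_pol_def by (simp add: lead_coeff_prod)

lemma poly_e_pol_eq_0_iff: "poly (e_pol \<iota> n) (E b) = 0 \<longleftrightarrow> b \<in> Adeg n"
  by (auto simp: poly_e_pol emb_eq_iff)

lemma poly_e_pol_add_root: "b \<in> Adeg n \<Longrightarrow> poly (e_pol \<iota> n) (x + E b) = poly (e_pol \<iota> n) x"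
  unfolding poly_e_pol
  by (rule prod.reindex_bij_witness[of _ "\<lambda>a. a + b" "\<lambda>a. a - b"])
     (auto simp: emb_add emb_diff Adeg_add Adeg_diff)

text \<open>
  For additivity and \<open>\<bbbF>\<^sub>q\<close>-homogeneity, both sides are polynomials in \<open>x\<close> of degree \<open>q^n\<close> with the
  same leading coefficient that agree on the \<open>q^n\<close> roots of \<open>e\<^sub>n\<close>.
\<close>
lemma poly_e_pol_add: "poly (e_pol \<iota> n) (x + y) = poly (e_pol \<iota> n) x + poly (e_pol \<iota> n) y"
proof -
  let ?e = "e_pol \<iota> n" and ?N = "CARD('k) ^ n"
  have N: "?N \<ge> 1"
    using card_finite_field_ge_2[where 'k='k] by simp
  have "?e \<circ>\<^sub>p [:x, 1:] = ?e + [:poly ?e x:]"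
  proof (rule poly_eqI_degree_lead_coeff[where n = ?N and A = "E ` Adeg n"])
    have "coeff [:poly ?e x:] ?N = 0"
      using N by (cases ?N) (auto simp: coeff_pCons)
    moreover have "lead_coeff (?e \<circ>\<^sub>p [:x, 1:]) = 1"
      by (simp add: lead_coeff_comp lead_coeff_e_pol)
    ultimately show "coeff (?e \<circ>\<^sub>p [:x, 1:]) ?N = coeff (?e + [:poly ?e x:]) ?N"
      using lead_coeff_e_pol[of n] by (simp add: degree_pcompose degree_e_pol)
    show "degree (?e + [:poly ?e x:]) \<le> ?N"
      by (rule order.trans[OF degree_add_le]) (auto simp: degree_e_pol)
    fix z
    assume "z \<in> E ` Adeg n"
    thus "poly (?e \<circ>\<^sub>p [:x, 1:]) z = poly (?e + [:poly ?e x:]) z"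
      by (auto simp: poly_pcompose poly_e_pol_add_root poly_e_pol_eq_0_iff add.commute)
  qed (simp_all add: card_emb_Adeg degree_pcompose degree_e_pol)
  hence "poly (?e \<circ>\<^sub>p [:x, 1:]) y = poly (?e + [:poly ?e x:]) y"
    by simp
  thus ?thesis
    by (simp add: poly_pcompose)
qed

lemma poly_e_pol_const_mult:
  "poly (e_pol \<iota> n) (E [:g:] * x) = E [:g:] * poly (e_pol \<iota> n) x"
proof -
  let ?e = "e_pol \<iota> n" and ?N = "CARD('k) ^ n"
  have "?e \<circ>\<^sub>p [:0, E [:g:]:] = smult (E [:g:]) ?e"
  proof (rule poly_eqI_degree_lead_coeff[where n = ?N and A = "E ` Adeg n"])
    have "E [:g:] ^ ?N = E [:g:]"
      by (simp add: emb_power[symmetric] poly_const_pow finite_field_power_card_power)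
    thus "coeff (?e \<circ>\<^sub>p [:0, E [:g:]:]) ?N = coeff (smult (E [:g:]) ?e) ?N"
      using lead_coeff_e_pol[of n] by (simp add: coeff_pcompose_linear degree_e_pol)
    show "degree (?e \<circ>\<^sub>p [:0, E [:g:]:]) \<le> ?N"
      by (rule order.trans[OF degree_pcompose_le]) (auto simp: degree_e_pol)
    show "degree (smult (E [:g:]) ?e) \<le> ?N"
      by (rule order.trans[OF degree_smult_le]) (simp add: degree_e_pol)
    fix z
    assume "z \<in> E ` Adeg n"
    then obtain b where b: "b \<in> Adeg n" "z = E b"
      by auto
    hence "poly ?e (E [:g:] * E b) = 0"
      by (simp add: poly_e_pol_eq_0_iff Adeg_smult flip: emb_smult)
    thus "poly (?e \<circ>\<^sub>p [:0, E [:g:]:]) z = poly (smult (E [:g:]) ?e) z"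
      using b by (simp add: poly_pcompose poly_e_pol_eq_0_iff mult.commute)
  qed (simp add: card_emb_Adeg)
  hence "poly (?e \<circ>\<^sub>p [:0, E [:g:]:]) x = poly (smult (E [:g:]) ?e) x"
    by simp
  thus ?thesis
    by (simp add: poly_pcompose mult.commute)
qed

definition e_comb :: "(nat \<Rightarrow> 'b fract) \<Rightarrow> nat \<Rightarrow> 'b fract poly" where
  "e_comb c n = (\<Sum>j<n. smult (c j) (e_pol \<iota> j))"

lemma e_comb_Suc: "e_comb c (Suc n) = e_comb c n + smult (c n) (e_pol \<iota> n)"
  by (simp add: e_comb_def)

lemma e_comb_cong: "(\<And>j. j < n \<Longrightarrow> c j = c' j) \<Longrightarrow> e_comb c n = e_comb c' n"
  unfolding e_comb_def by (intro sum.cong) auto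

lemma poly_e_comb_add: "poly (e_comb c n) (x + y) = poly (e_comb c n) x + poly (e_comb c n) y"
  by (simp add: e_comb_def poly_sum poly_e_pol_add distrib_left sum.distrib)

lemma poly_e_comb_const_mult: "poly (e_comb c n) (E [:g:] * x) = E [:g:] * poly (e_comb c n) x"
  by (simp add: e_comb_def poly_sum poly_e_pol_const_mult sum_distrib_left mult.left_commute)

lemma degree_e_comb_less: "degree (e_comb c n) < CARD('k) ^ n"
proof (induction n)
  case (Suc n)
  have "degree (e_comb c (Suc n)) \<le> max (degree (e_comb c n)) (degree (smult (c n) (e_pol \<iota> n)))"
    unfolding e_comb_Suc by (rule degree_add_le_max)
  also have "\<dots> \<le> CARD('k) ^ n"
    using Suc degree_smult_le[of "c n" "e_pol \<iota> n"] by (simp add: degree_e_pol)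
  also have "\<dots> < CARD('k) ^ Suc n"
    using card_finite_field_ge_2[where 'k='k] by simp
  finally show ?case .
qed (simp add: e_comb_def)

lemma e_comb_eq_imp_coeff_eq: "e_comb c n = e_comb c' n \<Longrightarrow> j < n \<Longrightarrow> c j = c' j"
proof (induction n arbitrary: j)
  case (Suc n)
  have top_coeff: "coeff (e_comb c'' (Suc n)) (CARD('k) ^ n) = c'' n" for c''
    using degree_e_comb_less[of c'' n] lead_coeff_e_pol[of n]
    by (simp add: e_comb_Suc degree_e_pol coeff_eq_0)
  have cn: "c n = c' n"
    using top_coeff[of c] top_coeff[of c'] Suc.prems(1) by simp
  hence "e_comb c n = e_comb c' n"
    using Suc.prems by (simp add: e_comb_Suc)
  thus ?case
    using Suc cn by (cases "j = n") auto
qed simp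

end

section \<open>Interpolation of \<open>\<bbbF>\<^sub>q\<close>-linear functions\<close>

locale Fq_linear_fun = Fq_poly_embedding \<iota> for \<iota> :: "'k::{field_gcd,finite} poly \<Rightarrow> 'b::idom" +
  fixes f :: "'k poly \<Rightarrow> 'b"
  assumes f_add: "\<And>a b. f (a + b) = f a + f b"
    and f_smult: "\<And>c a. f (smult c a) = \<iota> [:c:] * f a"
begin

definition F where "F a = to_fract (f a)"

lemma F_add: "F (a + b) = F a + F b"
  by (simp add: F_def f_add)

lemma F_zero: "F 0 = 0"
  using F_add[of 0 0] by (metis add.right_neutral add_left_cancel)

lemma F_smult: "F (smult c a) = E [:c:] * F a"
  by (simp add: F_def f_smult emb_def)

definition interpolates :: "nat \<Rightarrow> 'b fract poly \<Rightarrow> bool" where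
  "interpolates n p \<longleftrightarrow> (\<forall>b\<in>Adeg n. poly p (E b) = F b)"

lemma interpolation_unique:
  assumes "interpolates n p" "interpolates n p'"
    and "degree p < CARD('k) ^ n" "degree p' < CARD('k) ^ n"
  shows "p = p'"
  by (rule poly_eqI_degree[where A = "E ` Adeg n"])
     (use assms in \<open>auto simp: interpolates_def card_emb_Adeg\<close>)

definition lagrange :: "nat \<Rightarrow> 'b fract poly" where
  "lagrange n = smult ((-1) ^ n * E (Ld n) / E (Dd n)) (M_pol \<iota> n f)"

lemma nP_pol_eq_lagrange: "nP_pol \<iota> n f = lagrange n - [:poly (lagrange n) 0:]"
  by (simp add: nP_pol_def P_pol_def lagrange_def smult_diff_right)

lemma degree_lagrange_less: "degree (lagrange n) < CARD('k) ^ n"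
proof -
  have "degree (smult (F b) (\<Prod>a\<in>Amon n - {b}. [:- E a, 1:])) \<le> CARD('k) ^ n - 1"
    if "b \<in> Amon n" for b
    using that degree_smult_le[of "F b" "\<Prod>a\<in>Amon n - {b}. [:- E a, 1:]"]
    by (simp add: degree_prod_sum_eq card_Amon)
  hence "degree (M_pol \<iota> n f) \<le> CARD('k) ^ n - 1"
    unfolding M_pol_def F_def[symmetric] by (intro degree_sum_le) auto
  hence "degree (lagrange n) \<le> CARD('k) ^ n - 1"
    unfolding lagrange_def using degree_smult_le order_trans by blast
  moreover have "CARD('k) ^ n \<ge> 1"
    using card_finite_field_ge_2[where 'k='k] by simp
  ultimately show ?thesis
    by linarith
qed

lemma poly_M_pol_Amon:
  assumes a: "a \<in> Amon n"
  shows "poly (M_pol \<iota> n f) (E a) = F a * E (\<Prod>c\<in>Adeg n - {0}. c)"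
proof -
  have "poly (M_pol \<iota> n f) (E a) = (\<Sum>b\<in>Amon n. F b * (\<Prod>c\<in>Amon n - {b}. E a - E c))"
    by (simp add: M_pol_def poly_sum poly_prod F_def)
  also have "\<dots> = F a * (\<Prod>c\<in>Amon n - {a}. E a - E c)"
  proof -
    have "\<forall>b\<in>Amon n - {a}. F b * (\<Prod>c\<in>Amon n - {b}. E a - E c) = 0"
      using a by (auto intro!: prod_zero)
    hence "(\<Sum>b\<in>Amon n - {a}. F b * (\<Prod>c\<in>Amon n - {b}. E a - E c)) = 0"
      by (rule sum.neutral)
    thus ?thesis
      by (simp add: sum.remove[OF finite_Amon a])
  qed
  also have "(\<Prod>c\<in>Amon n - {a}. E a - E c) = (\<Prod>d\<in>Adeg n - {0}. E d)"
    by (rule prod.reindex_bij_witness[of _ "\<lambda>d. a - d" "\<lambda>c. a - c"])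
       (use a in \<open>auto simp: emb_diff intro: Amon_diff_Amon Amon_diff_Adeg\<close>)
  finally show ?thesis
    by (simp add: emb_prod)
qed

lemma poly_lagrange_Amon:
  assumes a: "a \<in> Amon n"
  shows "poly (lagrange n) (E a) = F a"
proof -
  let ?c = "(-1) ^ n * E (Ld n) / E (Dd n)" and ?\<Pi> = "E (\<Prod>c\<in>Adeg n - {0}. c)"
  have "E (Ld n) * ?\<Pi> = (-1) ^ n * E (Dd n)"
    using arg_cong[OF Ld_mult_prod_nonzero_Adeg[of n], of E]
    by (simp add: emb_mult emb_power emb_uminus emb_one)
  moreover have "E (Dd n) \<noteq> 0"
    using emb_eq_iff[of "Dd n" 0] Dd_nonzero by (simp add: emb_zero)
  ultimately have "?c * ?\<Pi> = (-1) ^ n * (-1) ^ n"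
    by (simp add: mult.assoc)
  also have "\<dots> = 1"
    by (simp flip: power_mult_distrib)
  finally have "?c * ?\<Pi> = 1" .
  moreover have "poly (lagrange n) (E a) = (?c * ?\<Pi>) * F a"
    by (simp add: lagrange_def poly_M_pol_Amon[OF a] ac_simps)
  ultimately show ?thesis
    by simp
qed

text \<open>\<open>x \<mapsto> lagrange n (x + b) - lagrange n x\<close> is the constant \<open>F b\<close> because \<open>A\<^sub>+(n) + b = A\<^sub>+(n)\<close>.\<close>
lemma interpolates_nP_pol: "interpolates n (nP_pol \<iota> n f)"
  unfolding interpolates_def
proof
  fix b :: "'k poly"
  assume b: "b \<in> Adeg n"
  let ?L = "lagrange n"
  have "?L \<circ>\<^sub>p [:E b, 1:] = ?L + [:F b:]"
  proof (rule poly_eqI_degree[where A = "E ` Amon n"])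
    fix z
    assume "z \<in> E ` Amon n"
    then obtain m where m: "m \<in> Amon n" "z = E m"
      by auto
    thus "poly (?L \<circ>\<^sub>p [:E b, 1:]) z = poly (?L + [:F b:]) z"
      using poly_lagrange_Amon[OF Amon_add_Adeg[OF m(1) b]] poly_lagrange_Amon[OF m(1)]
      by (simp add: poly_pcompose emb_add F_add add.commute)
  next
    show "degree (?L \<circ>\<^sub>p [:E b, 1:]) < card (E ` Amon n)"
      using degree_lagrange_less[of n] by (simp add: degree_pcompose card_emb_Amon)
    show "degree (?L + [:F b:]) < card (E ` Amon n)"
      using degree_lagrange_less[of n] card_finite_field_ge_2[where 'k='k]
      by (intro le_less_trans[OF degree_add_le_max]) (auto simp: card_emb_Amon)
  qed
  hence "poly (?L \<circ>\<^sub>p [:E b, 1:]) 0 = poly (?L + [:F b:]) 0"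
    by simp
  thus "poly (nP_pol \<iota> n f) (E b) = F b"
    by (simp add: nP_pol_eq_lagrange poly_pcompose)
qed

lemma degree_nP_pol_less: "degree (nP_pol \<iota> n f) < CARD('k) ^ n"
  unfolding nP_pol_eq_lagrange
  using degree_lagrange_less[of n] card_finite_field_ge_2[where 'k='k]
  by (intro le_less_trans[OF degree_diff_le_max]) auto

text \<open>
  The coefficients of the interpolant in the basis \<open>e\<^sub>j\<close>, chosen one at a time: the new
  coefficient corrects the value at \<open>\<theta>^n\<close>, where \<open>e\<^sub>n\<close> does not vanish.
\<close>
primrec e_coeffs :: "nat \<Rightarrow> nat \<Rightarrow> 'b fract" where
  "e_coeffs 0 = (\<lambda>_. 0)"
| "e_coeffs (Suc n) = (e_coeffs n)(n :=
     (F (monom 1 n) - poly (e_comb (e_coeffs n) n) (E (monom 1 n))) / poly (e_pol \<iota> n) (E (monom 1 n)))"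

lemma e_coeffs_eq_0: "n \<le> j \<Longrightarrow> e_coeffs n j = 0"
  by (induction n) auto

lemma e_comb_fun_upd [simp]: "e_comb (c(n := x)) n = e_comb c n"
  by (rule e_comb_cong) simp

lemma e_comb_e_coeffs_Suc:
  "e_comb (e_coeffs (Suc n)) (Suc n) = e_comb (e_coeffs n) n + smult (e_coeffs (Suc n) n) (e_pol \<iota> n)"
  by (simp add: e_comb_Suc)

lemma interpolates_e_comb_e_coeffs: "interpolates n (e_comb (e_coeffs n) n)"
proof (induction n)
  case 0
  show ?case
    by (simp add: interpolates_def e_comb_def Adeg_0 F_zero)
next
  case (Suc n)
  let ?X = "monom 1 n" and ?p = "e_comb (e_coeffs n) n" and ?\<kappa> = "e_coeffs (Suc n) n"
  have "poly (e_pol \<iota> n) (E ?X) \<noteq> 0"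
    by (simp add: poly_e_pol_eq_0_iff monom_notin_Adeg)
  hence value_at_X: "poly ?p (E ?X) + ?\<kappa> * poly (e_pol \<iota> n) (E ?X) = F ?X"
    by simp
  show ?case
    unfolding interpolates_def
  proof
    fix a :: "'k poly"
    assume a: "a \<in> Adeg (Suc n)"
    define g where "g = coeff a n"
    define b where "b = a - smult g ?X"
    have b: "b \<in> Adeg n"
      unfolding b_def g_def by (rule Adeg_Suc_minus_monom[OF a])
    have a_eq: "a = smult g ?X + b"
      by (simp add: b_def)
    have "poly (e_comb (e_coeffs (Suc n)) (Suc n)) (E a)
          = (E [:g:] * poly ?p (E ?X) + poly ?p (E b))
            + ?\<kappa> * (E [:g:] * poly (e_pol \<iota> n) (E ?X) + poly (e_pol \<iota> n) (E b))"
      unfolding a_eq e_comb_e_coeffs_Suc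
      by (simp add: emb_add emb_smult poly_e_comb_add poly_e_comb_const_mult
          poly_e_pol_add poly_e_pol_const_mult)
    also have "\<dots> = E [:g:] * (poly ?p (E ?X) + ?\<kappa> * poly (e_pol \<iota> n) (E ?X)) + F b"
      using Suc b
      by (simp add: poly_e_pol_eq_0_iff interpolates_def algebra_simps del: e_coeffs.simps)
    also have "\<dots> = F a"
      unfolding value_at_X by (simp add: a_eq F_add F_smult)
    finally show "poly (e_comb (e_coeffs (Suc n)) (Suc n)) (E a) = F a" .
  qed
qed

lemma nP_pol_eq_e_comb: "nP_pol \<iota> n f = e_comb (e_coeffs n) n"
  by (rule interpolation_unique[OF interpolates_nP_pol interpolates_e_comb_e_coeffs
        degree_nP_pol_less degree_e_comb_less])

lemma alpha_eq_e_coeffs: "alpha \<iota> n i f = e_coeffs n i"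
proof -
  have "(THE c. (\<forall>j. n \<le> j \<longrightarrow> c j = 0) \<and> nP_pol \<iota> n f = (\<Sum>j<n. smult (c j) (e_pol \<iota> j)))
        = e_coeffs n"
  proof (rule the_equality)
    show "(\<forall>j. n \<le> j \<longrightarrow> e_coeffs n j = 0) \<and> nP_pol \<iota> n f = (\<Sum>j<n. smult (e_coeffs n j) (e_pol \<iota> j))"
      using nP_pol_eq_e_comb by (simp add: e_coeffs_eq_0 e_comb_def)
  next
    fix c
    assume c: "(\<forall>j. n \<le> j \<longrightarrow> c j = 0) \<and> nP_pol \<iota> n f = (\<Sum>j<n. smult (c j) (e_pol \<iota> j))"
    hence eq: "e_comb c n = e_comb (e_coeffs n) n"
      by (simp add: e_comb_def nP_pol_eq_e_comb)
    show "c = e_coeffs n"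
    proof
      fix j
      show "c j = e_coeffs n j"
        using c e_comb_eq_imp_coeff_eq[OF eq, of j] e_coeffs_eq_0[of n j] by (cases "j < n") auto
    qed
  qed
  thus ?thesis
    by (simp add: alpha_def)
qed

end

theorem lemma4p2p4:
  fixes \<iota> :: "'k::{field_gcd,finite} poly \<Rightarrow> 'b::idom"
    and f :: "'k poly \<Rightarrow> 'b" and d :: nat
  assumes hom_add: "\<And>a b. \<iota> (a + b) = \<iota> a + \<iota> b"
    and hom_mult: "\<And>a b. \<iota> (a * b) = \<iota> a * \<iota> b"
    and hom_one: "\<iota> 1 = 1"
    and inj: "inj \<iota>"
    and f_add: "\<And>a b. f (a + b) = f a + f b"
    and f_smult: "\<And>c a. f (smult c a) = \<iota> [:c:] * f a"
    and d: "d \<ge> 1"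
  shows "nP_pol \<iota> (d + 1) f - smult (alpha \<iota> (d + 1) d f) (e_pol \<iota> d) = nP_pol \<iota> d f"
proof -
  interpret Fq_linear_fun \<iota> f
    by unfold_locales (fact hom_add hom_mult hom_one inj f_add f_smult)+
  show ?thesis
    unfolding Suc_eq_plus1[symmetric] nP_pol_eq_e_comb alpha_eq_e_coeffs e_comb_e_coeffs_Suc
    by simp
qed

end
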